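(* Let $G$ and $H$ be finite vertex-transitive graphs with $\frac{\alpha(G)}{|V(G)|}\geq\frac{\alpha(H)}{|V(H)|}$. Then \[\alpha(G\times H)=\alpha(G)\,|V(H)|,\] and at least one of the following holds: (i) $G\times H$ is MIS-normal; (ii) $\frac{\alpha(G)}{|V(G)|}=\frac{\alpha(H)}{|V(H)|}$ and at least one of $G$, $H$ is IS-imprimitive; (iii) $\frac{\alpha(G)}{|V(G)|}>\frac{\alpha(H)}{|V(H)|}$ and $H$ is disconnected.
   Context: All graphs are finite and simple; $\alpha(G)$ denotes the independence number of $G$. The direct product $G\times H$ has vertex set $V(G)\times V(H)$, with $(u_1,v_1)$ adjacent to $(u_2,v_2)$ if and only if $u_1u_2\in E(G)$ and $v_1v_2\in E(H)$. A maximum independent set is an independent set of size $\alpha$. The product $G\times H$ is called MIS-normal if every maximum independent set of $G\times H$ is the preimage of an independent set of one factor under the corresponding projection, i.e. is of the form $I\times V(H)$ with $I$ independent in $G$, or $V(G)\times J$ with $J$ independent in $H$. For $A\subseteq V(G)$, let $N_G(A)=\{b\in V(G): ab\in E(G)\text{ for some }a\in A\}$ and $N_G[A]=N_G(A)\cup A$. A (nonempty) independent set $A$ of $G$ is called imprimitive if $|A|<\alpha(G)$ and $\frac{|A|}{|N_G[A]|}=\frac{\alpha(G)}{|V(G)|}$. The graph $G$ is IS-imprimitive if it has an imprimitive independent set, and IS-primitive otherwise. *)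

theory Defs
  imports Complex_Main
begin

type_synonym 'a graph = "'a set \<times> ('a \<Rightarrow> 'a \<Rightarrow> bool)"

definition verts :: "'a graph \<Rightarrow> 'a set" where "verts G = fst G"
definition adj :: "'a graph \<Rightarrow> 'a \<Rightarrow> 'a \<Rightarrow> bool" where "adj G = snd G"

definition simple_graph :: "'a graph \<Rightarrow> bool" where
  "simple_graph G \<longleftrightarrow> finite (verts G)
     \<and> (\<forall>u v. adj G u v \<longrightarrow> u \<in> verts G \<and> v \<in> verts G)
     \<and> (\<forall>u v. adj G u v \<longrightarrow> adj G v u)
     \<and> (\<forall>v. \<not> adj G v v)"

definition indep_set :: "'a graph \<Rightarrow> 'a set \<Rightarrow> bool" where
  "indep_set G A \<longleftrightarrow> A \<subseteq> verts G \<and> (\<forall>u\<in>A. \<forall>v\<in>A. \<not> adj G u v)"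

definition indep_num :: "'a graph \<Rightarrow> nat" where
  "indep_num G = Max {card A | A. indep_set G A}"

definition max_indep_set :: "'a graph \<Rightarrow> 'a set \<Rightarrow> bool" where
  "max_indep_set G A \<longleftrightarrow> indep_set G A \<and> card A = indep_num G"

definition graph_aut :: "'a graph \<Rightarrow> ('a \<Rightarrow> 'a) \<Rightarrow> bool" where
  "graph_aut G f \<longleftrightarrow> bij_betw f (verts G) (verts G)
     \<and> (\<forall>u\<in>verts G. \<forall>v\<in>verts G. adj G u v \<longleftrightarrow> adj G (f u) (f v))"

definition vertex_transitive :: "'a graph \<Rightarrow> bool" where
  "vertex_transitive G \<longleftrightarrow>
     (\<forall>u\<in>verts G. \<forall>v\<in>verts G. \<exists>f. graph_aut G f \<and> f u = v)"

definition connected_graph :: "'a graph \<Rightarrow> bool" where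
  "connected_graph G \<longleftrightarrow> verts G \<noteq> {} \<and>
     (\<forall>u\<in>verts G. \<forall>v\<in>verts G. (adj G)\<^sup>*\<^sup>* u v)"

definition direct_prod :: "'a graph \<Rightarrow> 'b graph \<Rightarrow> ('a \<times> 'b) graph" where
  "direct_prod G H = (verts G \<times> verts H,
      \<lambda>(u1, v1) (u2, v2). adj G u1 u2 \<and> adj H v1 v2)"

definition MIS_normal :: "'a graph \<Rightarrow> 'b graph \<Rightarrow> bool" where
  "MIS_normal G H \<longleftrightarrow> (\<forall>S. max_indep_set (direct_prod G H) S \<longrightarrow>
      (\<exists>I. indep_set G I \<and> S = I \<times> verts H) \<or>
      (\<exists>J. indep_set H J \<and> S = verts G \<times> J))"

definition closed_nbhd :: "'a graph \<Rightarrow> 'a set \<Rightarrow> 'a set" where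
  "closed_nbhd G A = {b \<in> verts G. \<exists>a\<in>A. adj G a b} \<union> A"

definition imprimitive_set :: "'a graph \<Rightarrow> 'a set \<Rightarrow> bool" where
  "imprimitive_set G A \<longleftrightarrow> A \<noteq> {} \<and> indep_set G A \<and> card A < indep_num G \<and>
     real (card A) / real (card (closed_nbhd G A))
       = real (indep_num G) / real (card (verts G))"

definition IS_imprimitive :: "'a graph \<Rightarrow> bool" where
  "IS_imprimitive G \<longleftrightarrow> (\<exists>A. imprimitive_set G A)"

end

theory Submission
  imports Defs
begin

text \<open>Write \<open>\<rho>(G) = \<alpha>(G) / |V(G)|\<close>. Averaging over the automorphisms of a vertex-transitive
  graph \<open>G\<close> gives \<open>|A| \<le> \<rho>(G) |N[A]|\<close> for every independent set \<open>A\<close>: each automorphic image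
  of a maximum independent set meets \<open>N[A]\<close> in at least \<open>|A|\<close> points, since exchanging that part
  for \<open>A\<close> keeps it independent.

  An independent set \<open>S\<close> of \<open>G \<times> H\<close> splits into \<open>G\<close>-slices (the points \<open>(x, v) \<in> S\<close> such that
  no \<open>G\<close>-neighbour \<open>y\<close> of \<open>x\<close> has \<open>(y, v) \<in> S\<close>, grouped by \<open>v\<close>) and \<open>H\<close>-slices (the other points,
  grouped by \<open>x\<close>). The slices are independent in their factor, and their closed neighbourhoods,
  placed over the corresponding vertex of the other factor, are disjoint in \<open>V(G) \<times> V(H)\<close>.
  Bounding every slice by \<open>\<rho>(G) \<ge> \<rho>(H)\<close> gives \<open>|S| \<le> \<rho>(G) |V(G)| |V(H)| = \<alpha>(G) |V(H)|\<close>.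

  For a maximum \<open>S\<close> all these estimates are tight. If \<open>\<rho>(G) > \<rho>(H)\<close> this kills the \<open>H\<close>-slices;
  if \<open>\<rho>(G) = \<rho>(H)\<close> and both factors are IS-primitive, every nonempty slice dominates its factor,
  so only one kind of slice occurs. The slices are then maximum independent sets of one factor,
  constant along the edges of the other, which gives \<open>S = I \<times> V(H)\<close> or \<open>S = V(G) \<times> J\<close> as soon
  as the other factor is connected; and a disconnected vertex-transitive graph is IS-imprimitive,
  because a maximum independent set splits along a component.\<close>

section \<open>Independent sets and closed neighbourhoods\<close>

lemma simple_graph_finite: "simple_graph G \<Longrightarrow> finite (verts G)"
  by (simp add: simple_graph_def)

lemma simple_graph_adj_sym: "simple_graph G \<Longrightarrow> adj G u v \<Longrightarrow> adj G v u"
  by (simp add: simple_graph_def)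

lemma simple_graph_adj_verts: "simple_graph G \<Longrightarrow> adj G u v \<Longrightarrow> u \<in> verts G \<and> v \<in> verts G"
  by (simp add: simple_graph_def)

lemma indep_set_empty [simp]: "indep_set G {}"
  by (simp add: indep_set_def)

lemma indep_set_subset: "indep_set G A \<Longrightarrow> B \<subseteq> A \<Longrightarrow> indep_set G B"
  by (auto simp: indep_set_def)

lemma indep_set_finite: "simple_graph G \<Longrightarrow> indep_set G A \<Longrightarrow> finite A"
  by (meson indep_set_def simple_graph_finite finite_subset)

lemma finite_card_indep_sets: "simple_graph G \<Longrightarrow> finite {card A | A. indep_set G A}"
proof -
  assume "simple_graph G"
  then have "finite (card ` Pow (verts G))"
    by (simp add: simple_graph_finite)
  moreover have "{card A | A. indep_set G A} \<subseteq> card ` Pow (verts G)"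
    by (auto simp: indep_set_def)
  ultimately show ?thesis
    by (rule finite_subset[rotated])
qed

lemma card_le_indep_num: "simple_graph G \<Longrightarrow> indep_set G A \<Longrightarrow> card A \<le> indep_num G"
  unfolding indep_num_def by (auto intro: Max_ge finite_card_indep_sets)

lemma ex_max_indep_set: "simple_graph G \<Longrightarrow> \<exists>I. max_indep_set G I"
proof -
  assume G: "simple_graph G"
  have "indep_num G \<in> {card A | A. indep_set G A}"
    unfolding indep_num_def using finite_card_indep_sets[OF G] indep_set_empty
    by (intro Max_in) blast+
  then show ?thesis
    by (auto simp: max_indep_set_def)
qed

lemma indep_num_pos: "simple_graph G \<Longrightarrow> verts G \<noteq> {} \<Longrightarrow> 0 < indep_num G"
proof -
  assume G: "simple_graph G" and "verts G \<noteq> {}"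
  then obtain v where "v \<in> verts G" by blast
  with G have "indep_set G {v}"
    by (auto simp: indep_set_def simple_graph_def)
  from card_le_indep_num[OF G this] show ?thesis by simp
qed

lemma max_indep_set_dominating:
  assumes G: "simple_graph G" and I: "max_indep_set G I"
    and w: "w \<in> verts G" "w \<notin> I"
  shows "\<exists>i\<in>I. adj G w i"
proof (rule ccontr)
  assume "\<not> ?thesis"
  with G I w have "indep_set G (insert w I)"
    by (auto simp: max_indep_set_def indep_set_def simple_graph_def)
  from card_le_indep_num[OF G this] I w(2) indep_set_finite[OF G] show False
    by (auto simp: max_indep_set_def)
qed

lemma closed_nbhd_subset_verts: "A \<subseteq> verts G \<Longrightarrow> closed_nbhd G A \<subseteq> verts G"
  by (auto simp: closed_nbhd_def)

lemma subset_closed_nbhd: "A \<subseteq> closed_nbhd G A"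
  by (auto simp: closed_nbhd_def)

lemma closed_nbhd_empty [simp]: "closed_nbhd G {} = {}"
  by (simp add: closed_nbhd_def)

lemma finite_closed_nbhd: "simple_graph G \<Longrightarrow> A \<subseteq> verts G \<Longrightarrow> finite (closed_nbhd G A)"
  by (meson closed_nbhd_subset_verts simple_graph_finite finite_subset)

lemma card_closed_nbhd_pos:
  "simple_graph G \<Longrightarrow> indep_set G A \<Longrightarrow> A \<noteq> {} \<Longrightarrow> 0 < card (closed_nbhd G A)"
  by (metis card_gt_0_iff finite_closed_nbhd indep_set_def subset_closed_nbhd subset_empty)

section \<open>The independence ratio of a vertex-transitive graph\<close>

text \<open>Automorphisms are taken to be the identity outside the vertex set, so that there are
  only finitely many of them.\<close>

definition auts :: "'a graph \<Rightarrow> ('a \<Rightarrow> 'a) set" where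
  "auts G = {f. graph_aut G f \<and> (\<forall>x. x \<notin> verts G \<longrightarrow> f x = x)}"

lemma auts_bij_betw: "f \<in> auts G \<Longrightarrow> bij_betw f (verts G) (verts G)"
  by (simp add: auts_def graph_aut_def)

lemma auts_adj_iff:
  "f \<in> auts G \<Longrightarrow> u \<in> verts G \<Longrightarrow> v \<in> verts G \<Longrightarrow> adj G (f u) (f v) \<longleftrightarrow> adj G u v"
  by (simp add: auts_def graph_aut_def)

lemma auts_eqI:
  assumes "f \<in> auts G" "g \<in> auts G" "\<And>x. x \<in> verts G \<Longrightarrow> f x = g x"
  shows "f = g"
proof
  fix x show "f x = g x"
    using assms by (cases "x \<in> verts G") (auto simp: auts_def)
qed

lemma finite_auts:
  assumes G: "simple_graph G" shows "finite (auts G)"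
proof -
  let ?graph = "\<lambda>f. (\<lambda>x. (x, f x)) ` verts G"
  have "?graph f \<subseteq> verts G \<times> verts G" if "f \<in> auts G" for f
    using auts_bij_betw[OF that] by (auto dest: bij_betwE)
  then have "?graph ` auts G \<subseteq> Pow (verts G \<times> verts G)"
    by blast
  then have "finite (?graph ` auts G)"
    using simple_graph_finite[OF G] by (meson finite_Pow_iff finite_SigmaI finite_subset)
  moreover have "inj_on ?graph (auts G)"
  proof (rule inj_onI)
    fix f g assume f: "f \<in> auts G" and g: "g \<in> auts G" and eq: "?graph f = ?graph g"
    show "f = g"
    proof (rule auts_eqI[OF f g])
      fix x assume "x \<in> verts G"
      then have "(x, f x) \<in> ?graph g" using eq by blast
      then show "f x = g x" by auto
    qed
  qed
  ultimately show ?thesis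
    using finite_imageD by blast
qed

lemma id_in_auts: "id \<in> auts G"
  by (simp add: auts_def graph_aut_def bij_betw_id)

lemma comp_in_auts:
  assumes f: "f \<in> auts G" and g: "g \<in> auts G"
  shows "f \<circ> g \<in> auts G"
proof -
  have g_verts: "g u \<in> verts G" if "u \<in> verts G" for u
    using auts_bij_betw[OF g] that by (blast dest: bij_betwE)
  have "bij_betw (f \<circ> g) (verts G) (verts G)"
    using auts_bij_betw[OF g] auts_bij_betw[OF f] by (rule bij_betw_trans)
  moreover have "adj G u v \<longleftrightarrow> adj G ((f \<circ> g) u) ((f \<circ> g) v)"
    if "u \<in> verts G" "v \<in> verts G" for u v
    using that g_verts auts_adj_iff[OF f] auts_adj_iff[OF g] by simp
  moreover have "(f \<circ> g) x = x" if "x \<notin> verts G" for x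
    using f g that by (simp add: auts_def)
  ultimately show ?thesis
    unfolding auts_def graph_aut_def by blast
qed

lemma vertex_transitive_auts:
  assumes "vertex_transitive G" "u \<in> verts G" "v \<in> verts G"
  shows "\<exists>f\<in>auts G. f u = v"
proof -
  obtain f where f: "graph_aut G f" "f u = v"
    using assms unfolding vertex_transitive_def by blast
  define f' where "f' x = (if x \<in> verts G then f x else x)" for x
  have "bij_betw f' (verts G) (verts G)"
    using f(1) bij_betw_cong[of "verts G" f' f] by (simp add: graph_aut_def f'_def)
  then have "f' \<in> auts G"
    using f(1) by (simp add: auts_def graph_aut_def f'_def)
  moreover have "f' u = v"
    using f(2) assms(2) by (simp add: f'_def)
  ultimately show ?thesis by blast
qed

lemma card_auts_mapping_mono:
  assumes G: "simple_graph G" and vt: "vertex_transitive G"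
    and "x \<in> verts G" "y \<in> verts G" "x' \<in> verts G" "y' \<in> verts G"
  shows "card {f \<in> auts G. f x = y} \<le> card {f \<in> auts G. f x' = y'}"
proof -
  obtain g where g: "g \<in> auts G" "g y = y'" using vertex_transitive_auts[OF vt] assms by blast
  obtain h where h: "h \<in> auts G" "h x' = x" using vertex_transitive_auts[OF vt] assms by blast
  have "inj_on (\<lambda>f. g \<circ> f \<circ> h) {f \<in> auts G. f x = y}"
  proof (rule inj_onI)
    fix f1 f2 assume f1: "f1 \<in> {f \<in> auts G. f x = y}" and f2: "f2 \<in> {f \<in> auts G. f x = y}"
      and eq: "g \<circ> f1 \<circ> h = g \<circ> f2 \<circ> h"
    show "f1 = f2"
    proof (rule auts_eqI)
      show "f1 \<in> auts G" "f2 \<in> auts G" using f1 f2 by auto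
      fix z assume z: "z \<in> verts G"
      obtain w where "w \<in> verts G" "h w = z"
        using auts_bij_betw[OF h(1)] z by (metis bij_betw_imp_surj_on imageE)
      then have "g (f1 z) = g (f2 z)"
        using fun_cong[OF eq, of w] by simp
      moreover have "f1 z \<in> verts G" "f2 z \<in> verts G"
        using f1 f2 z auts_bij_betw by (blast dest: bij_betwE)+
      ultimately show "f1 z = f2 z"
        using auts_bij_betw[OF g(1)] by (auto simp: bij_betw_def dest: inj_onD)
    qed
  qed
  moreover have "(\<lambda>f. g \<circ> f \<circ> h) ` {f \<in> auts G. f x = y} \<subseteq> {f \<in> auts G. f x' = y'}"
    using g h by (auto intro!: comp_in_auts)
  ultimately show ?thesis
    using finite_auts[OF G] by (intro card_inj_on_le) auto
qed

lemma card_auts_mapping_eq: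
  assumes "simple_graph G" "vertex_transitive G"
    and "x \<in> verts G" "y \<in> verts G" "x' \<in> verts G" "y' \<in> verts G"
  shows "card {f \<in> auts G. f x = y} = card {f \<in> auts G. f x' = y'}"
  using card_auts_mapping_mono[OF assms] card_auts_mapping_mono[OF assms(1,2,5,6,3,4)] by simp

lemma sum_card_auts_image_inter:
  assumes G: "simple_graph G" and vt: "vertex_transitive G" and x0: "x0 \<in> verts G"
    and I: "I \<subseteq> verts G" and N: "N \<subseteq> verts G"
  shows "(\<Sum>f\<in>auts G. card (f ` I \<inter> N)) = card I * card N * card {f \<in> auts G. f x0 = x0}"
proof -
  have fin: "finite I" "finite N"
    using I N simple_graph_finite[OF G] finite_subset by auto
  have "card (f ` I \<inter> N) = (\<Sum>x\<in>I. \<Sum>y\<in>N. (if f x = y then 1 else 0))" if f: "f \<in> auts G" for f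
  proof -
    have "inj_on f I"
      using auts_bij_betw[OF f] I by (meson bij_betw_def inj_on_subset)
    then have "card (f ` {x \<in> I. f x \<in> N}) = card {x \<in> I. f x \<in> N}"
      by (simp add: card_image inj_on_subset)
    moreover have "f ` I \<inter> N = f ` {x \<in> I. f x \<in> N}"
      by blast
    ultimately have "card (f ` I \<inter> N) = card {x \<in> I. f x \<in> N}"
      by simp
    also have "\<dots> = (\<Sum>x\<in>I. if f x \<in> N then 1 else 0)"
      using fin by (simp add: sum.If_cases Int_def)
    also have "\<dots> = (\<Sum>x\<in>I. \<Sum>y\<in>N. (if f x = y then 1 else 0))"
      using fin by (simp add: sum.delta')
    finally show ?thesis .
  qed
  then have "(\<Sum>f\<in>auts G. card (f ` I \<inter> N))
      = (\<Sum>f\<in>auts G. \<Sum>x\<in>I. \<Sum>y\<in>N. (if f x = y then 1 else 0))"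
    by (rule sum.cong[OF refl])
  also have "\<dots> = (\<Sum>x\<in>I. \<Sum>f\<in>auts G. \<Sum>y\<in>N. (if f x = y then 1 else 0))"
    by (rule sum.swap)
  also have "\<dots> = (\<Sum>x\<in>I. \<Sum>y\<in>N. \<Sum>f\<in>auts G. (if f x = y then 1 else 0))"
    by (intro sum.cong refl sum.swap)
  also have "\<dots> = (\<Sum>x\<in>I. \<Sum>y\<in>N. card {f \<in> auts G. f x0 = x0})"
    using finite_auts[OF G] I N card_auts_mapping_eq[OF G vt _ _ x0 x0]
    by (intro sum.cong refl) (auto simp: sum.If_cases Int_def)
  finally show ?thesis
    by simp
qed

lemma card_le_card_image_inter_closed_nbhd:
  assumes G: "simple_graph G" and A: "indep_set G A" and I: "max_indep_set G I"
    and f: "f \<in> auts G"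
  shows "card A \<le> card (f ` I \<inter> closed_nbhd G A)"
proof -
  let ?N = "closed_nbhd G A"
  have IV: "I \<subseteq> verts G" and AV: "A \<subseteq> verts G" and cI: "card I = indep_num G"
    using A I by (auto simp: indep_set_def max_indep_set_def)
  have fI: "f ` I \<subseteq> verts G"
    using auts_bij_betw[OF f] IV by (auto dest: bij_betwE)
  have fin: "finite (f ` I)" "finite A"
    using I A indep_set_finite[OF G] by (auto simp: max_indep_set_def)
  have card_fI: "card (f ` I) = card I"
    using auts_bij_betw[OF f] IV by (meson bij_betw_def card_image inj_on_subset)
  txt \<open>Replacing the part of \<open>f ` I\<close> inside \<open>N[A]\<close> by \<open>A\<close> keeps the set independent.\<close>
  have "indep_set G ((f ` I - ?N) \<union> A)"
    unfolding indep_set_def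
  proof (intro conjI ballI)
    show "(f ` I - ?N) \<union> A \<subseteq> verts G" using fI AV by auto
  next
    fix u v assume u: "u \<in> (f ` I - ?N) \<union> A" and v: "v \<in> (f ` I - ?N) \<union> A"
    show "\<not> adj G u v"
    proof
      assume uv: "adj G u v"
      then have vu: "adj G v u" using simple_graph_adj_sym[OF G] by blast
      consider "u \<in> A" "v \<in> A" | "u \<in> A" "v \<in> f ` I - ?N" | "u \<in> f ` I - ?N" "v \<in> A"
        | "u \<in> f ` I - ?N" "v \<in> f ` I - ?N"
        using u v by blast
      then show False
      proof cases
        case 1 then show False using A uv by (auto simp: indep_set_def)
      next
        case 2 then show False using uv fI by (auto simp: closed_nbhd_def)
      next
        case 3 then show False using vu fI by (auto simp: closed_nbhd_def)
      next
        case 4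
        then obtain x y where xy: "x \<in> I" "y \<in> I" "u = f x" "v = f y" by blast
        then have "adj G x y"
          using uv IV auts_adj_iff[OF f, of x y] by auto
        with xy I show False
          by (auto simp: max_indep_set_def indep_set_def)
      qed
    qed
  qed
  then have "card ((f ` I - ?N) \<union> A) \<le> card I"
    using card_le_indep_num[OF G] cI by simp
  moreover have "card ((f ` I - ?N) \<union> A) = card (f ` I - ?N) + card A"
    using fin by (intro card_Un_disjoint) (auto simp: closed_nbhd_def)
  moreover have "card (f ` I) = card (f ` I \<inter> ?N) + card (f ` I - ?N)"
    using fin(1) by (rule card_Int_Diff)
  ultimately show ?thesis
    using card_fI by linarith
qed

lemma card_auts_eq:
  assumes G: "simple_graph G" and vt: "vertex_transitive G" and x0: "x0 \<in> verts G"
  shows "card (auts G) = card (verts G) * card {f \<in> auts G. f x0 = x0}"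
proof -
  obtain I where I: "max_indep_set G I"
    using ex_max_indep_set[OF G] by blast
  have IV: "I \<subseteq> verts G" and "0 < card I"
    using I indep_num_pos[OF G] x0 by (auto simp: max_indep_set_def indep_set_def)
  have "f ` I \<inter> verts G = f ` I" "card (f ` I) = card I" if "f \<in> auts G" for f
    using auts_bij_betw[OF that] IV
    by (auto dest: bij_betwE) (meson bij_betw_def card_image inj_on_subset)
  then have "card (auts G) * card I = card I * card (verts G) * card {f \<in> auts G. f x0 = x0}"
    using sum_card_auts_image_inter[OF G vt x0 IV order_refl] by simp
  with \<open>0 < card I\<close> show ?thesis
    by (simp add: mult.commute)
qed

lemma vertex_transitive_card_indep_le:
  assumes G: "simple_graph G" and vt: "vertex_transitive G" and A: "indep_set G A"
  shows "card A * card (verts G) \<le> indep_num G * card (closed_nbhd G A)"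
proof (cases "verts G = {}")
  case True
  then show ?thesis by simp
next
  case False
  then obtain x0 where x0: "x0 \<in> verts G" by blast
  obtain I where I: "max_indep_set G I"
    using ex_max_indep_set[OF G] by blast
  have IV: "I \<subseteq> verts G" and cI: "card I = indep_num G"
    using I by (auto simp: max_indep_set_def indep_set_def)
  have NV: "closed_nbhd G A \<subseteq> verts G"
    using A closed_nbhd_subset_verts[of A G] by (simp add: indep_set_def)
  define c where "c = card {f \<in> auts G. f x0 = x0}"
  have card_auts: "card (auts G) = card (verts G) * c"
    unfolding c_def by (rule card_auts_eq[OF G vt x0])
  have "0 < card (auts G)"
    using id_in_auts finite_auts[OF G] card_gt_0_iff by blast
  then have "0 < c"
    using card_auts by simp
  have "card (auts G) * card A \<le> (\<Sum>f\<in>auts G. card (f ` I \<inter> closed_nbhd G A))"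
    using card_le_card_image_inter_closed_nbhd[OF G A I] sum_mono[of "auts G" "\<lambda>_. card A"]
    by simp
  also have "\<dots> = card I * card (closed_nbhd G A) * c"
    unfolding c_def by (rule sum_card_auts_image_inter[OF G vt x0 IV NV])
  finally have "c * (card A * card (verts G)) \<le> c * (indep_num G * card (closed_nbhd G A))"
    using card_auts cI by (simp add: algebra_simps)
  then show ?thesis
    using \<open>0 < c\<close> by simp
qed

definition indep_ratio :: "'a graph \<Rightarrow> real" where
  "indep_ratio G = real (indep_num G) / real (card (verts G))"

lemma indep_ratio_nonneg: "0 \<le> indep_ratio G"
  by (simp add: indep_ratio_def)

lemma indep_ratio_mult_card_verts:
  "verts G \<noteq> {} \<Longrightarrow> simple_graph G \<Longrightarrow> indep_ratio G * card (verts G) = indep_num G"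
  by (simp add: indep_ratio_def simple_graph_finite)

lemma vertex_transitive_card_indep_le_ratio:
  assumes "simple_graph G" "vertex_transitive G" "indep_set G A"
  shows "card A \<le> indep_ratio G * card (closed_nbhd G A)"
proof (cases "card (verts G) = 0")
  case True
  then have "A = {}"
    using assms by (auto simp: indep_set_def simple_graph_def)
  then show ?thesis by simp
next
  case False
  have "real (card A * card (verts G)) \<le> real (indep_num G * card (closed_nbhd G A))"
    using vertex_transitive_card_indep_le[OF assms] by linarith
  with False show ?thesis
    by (simp add: indep_ratio_def field_simps)
qed

section \<open>Imprimitive independent sets\<close>

lemma imprimitive_set_iff:
  assumes G: "simple_graph G" and A: "indep_set G A" "A \<noteq> {}"
  shows "imprimitive_set G A \<longleftrightarrow>
    card A < indep_num G \<and> card A = indep_ratio G * card (closed_nbhd G A)"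
  using card_closed_nbhd_pos[OF G A]
  by (auto simp: imprimitive_set_def indep_ratio_def A field_simps)

lemma imprimitive_set_of_split:
  assumes G: "simple_graph G" and vt: "vertex_transitive G" and I: "max_indep_set G I"
    and A: "A \<subseteq> I" "A \<noteq> {}" "I - A \<noteq> {}"
    and disj: "closed_nbhd G A \<inter> closed_nbhd G (I - A) = {}"
  shows "imprimitive_set G A"
proof -
  let ?r = "indep_ratio G" and ?N1 = "closed_nbhd G A" and ?N2 = "closed_nbhd G (I - A)"
  have IV: "I \<subseteq> verts G" and fin: "finite I"
    using I indep_set_finite[OF G] by (auto simp: max_indep_set_def indep_set_def)
  have indep: "indep_set G A" "indep_set G (I - A)"
    using I A(1) indep_set_subset[of G I] by (auto simp: max_indep_set_def)
  have sub: "A \<subseteq> verts G" "I - A \<subseteq> verts G"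
    using IV A(1) by auto
  have "card ?N1 + card ?N2 = card (?N1 \<union> ?N2)"
    using disj finite_closed_nbhd[OF G sub(1)] finite_closed_nbhd[OF G sub(2)]
    by (intro card_Un_disjoint[symmetric]) auto
  also have "\<dots> \<le> card (verts G)"
    using closed_nbhd_subset_verts[OF sub(1)] closed_nbhd_subset_verts[OF sub(2)]
      simple_graph_finite[OF G] by (intro card_mono) auto
  finally have "?r * card ?N1 + ?r * card ?N2 \<le> ?r * card (verts G)"
    by (simp add: indep_ratio_nonneg mult_left_mono flip: distrib_left)
  also have "\<dots> = card I"
    using indep_ratio_mult_card_verts[OF _ G] sub(1) A(2) I by (auto simp: max_indep_set_def)
  also have "\<dots> = card A + card (I - A)"
    using card_Int_Diff[OF fin, of A] A(1) by (simp add: Int_absorb1 inf.absorb2)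
  finally have "card A = ?r * card ?N1"
    using vertex_transitive_card_indep_le_ratio[OF G vt indep(1)]
      vertex_transitive_card_indep_le_ratio[OF G vt indep(2)] by linarith
  moreover have "card A < indep_num G"
    using I A fin psubset_card_mono[of I A] by (auto simp: max_indep_set_def)
  ultimately show ?thesis
    using imprimitive_set_iff[OF G indep(1) A(2)] by blast
qed

lemma disconnected_IS_imprimitive:
  assumes G: "simple_graph G" and vt: "vertex_transitive G" and ne: "verts G \<noteq> {}"
    and disconn: "\<not> connected_graph G"
  shows "IS_imprimitive G"
proof -
  obtain u v where uv: "u \<in> verts G" "v \<in> verts G" "\<not> (adj G)\<^sup>*\<^sup>* u v"
    using disconn ne by (auto simp: connected_graph_def)
  define K where "K = {w. (adj G)\<^sup>*\<^sup>* u w}"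
  obtain I where I: "max_indep_set G I"
    using ex_max_indep_set[OF G] by blast
  have dom: "\<exists>i\<in>I. w = i \<or> adj G w i" if "w \<in> verts G" for w
    using max_indep_set_dominating[OF G I that] by blast
  have "I \<inter> K \<noteq> {}"
    using dom[OF uv(1)] by (auto simp: K_def)
  moreover have "I - I \<inter> K \<noteq> {}"
  proof -
    obtain i where i: "i \<in> I" "v = i \<or> adj G v i"
      using dom[OF uv(2)] by blast
    have "i \<notin> K"
    proof
      assume "i \<in> K"
      then have "(adj G)\<^sup>*\<^sup>* u i" by (simp add: K_def)
      with i(2) simple_graph_adj_sym[OF G] have "(adj G)\<^sup>*\<^sup>* u v"
        by (metis rtranclp.rtrancl_into_rtrancl)
      with uv(3) show False ..
    qed
    with i(1) show ?thesis by blast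
  qed
  moreover have "closed_nbhd G (I \<inter> K) \<subseteq> K"
    by (auto simp: closed_nbhd_def K_def intro: rtranclp.rtrancl_into_rtrancl)
  moreover have "closed_nbhd G (I - I \<inter> K) \<inter> K = {}"
    using simple_graph_adj_sym[OF G]
    by (auto simp: closed_nbhd_def K_def intro: rtranclp.rtrancl_into_rtrancl)
  ultimately have "imprimitive_set G (I \<inter> K)"
    by (intro imprimitive_set_of_split[OF G vt I]) auto
  then show ?thesis
    by (auto simp: IS_imprimitive_def)
qed

lemma not_IS_imprimitive_tight_indep_set:
  assumes G: "simple_graph G" and prim: "\<not> IS_imprimitive G"
    and A: "indep_set G A" "A \<noteq> {}"
    and tight: "card A = indep_ratio G * card (closed_nbhd G A)"
  shows "card A = indep_num G \<and> closed_nbhd G A = verts G"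
proof
  have AV: "A \<subseteq> verts G"
    using A by (simp add: indep_set_def)
  then have ne: "verts G \<noteq> {}"
    using A(2) by blast
  have "\<not> card A < indep_num G"
    using prim tight imprimitive_set_iff[OF G A] by (auto simp: IS_imprimitive_def)
  then show card_A: "card A = indep_num G"
    using card_le_indep_num[OF G A(1)] by simp
  have "indep_ratio G * card (closed_nbhd G A) = indep_ratio G * card (verts G)"
    using tight card_A indep_ratio_mult_card_verts[OF ne G] by linarith
  moreover have "0 < indep_ratio G"
    using indep_num_pos[OF G ne] ne simple_graph_finite[OF G]
    by (auto simp: indep_ratio_def card_gt_0_iff)
  ultimately have "card (closed_nbhd G A) = card (verts G)"
    by simp
  then show "closed_nbhd G A = verts G"
    using closed_nbhd_subset_verts[OF AV] simple_graph_finite[OF G] by (metis card_subset_eq)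
qed

section \<open>Slices of an independent set of a direct product\<close>

lemma verts_direct_prod [simp]: "verts (direct_prod G H) = verts G \<times> verts H"
  by (simp add: verts_def direct_prod_def)

lemma adj_direct_prod [simp]:
  "adj (direct_prod G H) (x, v) (y, w) \<longleftrightarrow> adj G x y \<and> adj H v w"
  by (simp add: adj_def direct_prod_def)

lemma simple_graph_direct_prod:
  "simple_graph G \<Longrightarrow> simple_graph H \<Longrightarrow> simple_graph (direct_prod G H)"
  unfolding simple_graph_def by (auto simp: adj_def direct_prod_def verts_def)

lemma indep_set_times_verts:
  "indep_set G I \<Longrightarrow> indep_set (direct_prod G H) (I \<times> verts H)"
  by (auto simp: indep_set_def)

lemma card_swapped_Sigma:
  assumes "finite I" "\<And>i. i \<in> I \<Longrightarrow> finite (F i)"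
  shows "card {(x, i). i \<in> I \<and> x \<in> F i} = (\<Sum>i\<in>I. card (F i))"
proof -
  have "{(x, i). i \<in> I \<and> x \<in> F i} = prod.swap ` (SIGMA i:I. F i)"
    by force
  moreover have "inj_on prod.swap (SIGMA i:I. F i)"
    by (simp add: inj_on_def)
  ultimately show ?thesis
    using assms by (simp add: card_image)
qed

definition slice_G :: "'a graph \<Rightarrow> ('a \<times> 'b) set \<Rightarrow> 'b \<Rightarrow> 'a set" where
  "slice_G G S v = {x. (x, v) \<in> S \<and> (\<forall>y. adj G x y \<longrightarrow> (y, v) \<notin> S)}"

definition slice_H :: "'a graph \<Rightarrow> ('a \<times> 'b) set \<Rightarrow> 'a \<Rightarrow> 'b set" where
  "slice_H G S x = {v. (x, v) \<in> S \<and> (\<exists>y. adj G x y \<and> (y, v) \<in> S)}"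

locale indep_set_direct_prod =
  fixes G :: "'a graph" and H :: "'b graph" and S :: "('a \<times> 'b) set"
  assumes G: "simple_graph G" and H: "simple_graph H"
    and indep: "indep_set (direct_prod G H) S"
begin

lemma S_subset: "S \<subseteq> verts G \<times> verts H"
  using indep by (simp add: indep_set_def)

lemma not_adj_in_S: "(x, v) \<in> S \<Longrightarrow> (y, w) \<in> S \<Longrightarrow> adj G x y \<Longrightarrow> adj H v w \<Longrightarrow> False"
proof -
  assume "(x, v) \<in> S" "(y, w) \<in> S" "adj G x y" "adj H v w"
  with indep have "\<not> adj (direct_prod G H) (x, v) (y, w)"
    unfolding indep_set_def by blast
  with \<open>adj G x y\<close> \<open>adj H v w\<close> show False
    by simp
qed

lemma S_eq_slices:
  "S = {(x, v). v \<in> verts H \<and> x \<in> slice_G G S v} \<union> (SIGMA x:verts G. slice_H G S x)"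
  using S_subset by (auto simp: slice_G_def slice_H_def)

lemma indep_slice_G: "indep_set G (slice_G G S v)"
  using S_subset by (auto simp: indep_set_def slice_G_def)

lemma indep_slice_H: "indep_set H (slice_H G S x)"
  unfolding indep_set_def
proof (intro conjI ballI)
  show "slice_H G S x \<subseteq> verts H"
    using S_subset by (auto simp: slice_H_def)
next
  fix v w assume v: "v \<in> slice_H G S x" and w: "w \<in> slice_H G S x"
  then obtain y where "adj G x y" "(y, v) \<in> S" and "(x, w) \<in> S"
    by (auto simp: slice_H_def)
  then show "\<not> adj H v w"
    using not_adj_in_S simple_graph_adj_sym[OF G] by blast
qed

lemma slice_G_subset: "slice_G G S v \<subseteq> verts G"
  using indep_slice_G by (simp add: indep_set_def)

lemma slice_H_subset: "slice_H G S x \<subseteq> verts H"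
  using indep_slice_H by (simp add: indep_set_def)

lemma no_edge_between_slices_G:
  "adj H v w \<Longrightarrow> x \<in> slice_G G S v \<Longrightarrow> y \<in> slice_G G S w \<Longrightarrow> \<not> adj G x y"
  using not_adj_in_S by (auto simp: slice_G_def)

lemma no_edge_between_slices_H:
  "adj G x y \<Longrightarrow> v \<in> slice_H G S x \<Longrightarrow> w \<in> slice_H G S y \<Longrightarrow> \<not> adj H v w"
  using not_adj_in_S by (auto simp: slice_H_def)

lemma card_eq_sum_slices:
  "card S = (\<Sum>v\<in>verts H. card (slice_G G S v)) + (\<Sum>x\<in>verts G. card (slice_H G S x))"
proof -
  let ?P = "{(x, v). v \<in> verts H \<and> x \<in> slice_G G S v}" and ?B = "SIGMA x:verts G. slice_H G S x"
  have fin_slices: "\<And>v. finite (slice_G G S v)" "\<And>x. finite (slice_H G S x)"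
    using indep_set_finite G H indep_slice_G indep_slice_H by blast+
  have "finite S"
    using S_subset simple_graph_finite[OF G] simple_graph_finite[OF H] finite_subset by blast
  then have "finite ?P" "finite ?B"
    using S_eq_slices by (metis finite_Un)+
  moreover have "?P \<inter> ?B = {}"
    by (auto simp: slice_G_def slice_H_def)
  ultimately have "card S = card ?P + card ?B"
    by (subst S_eq_slices, intro card_Un_disjoint)
  then show ?thesis
    using fin_slices simple_graph_finite[OF G] simple_graph_finite[OF H]
    by (simp add: card_swapped_Sigma)
qed

lemma closed_nbhd_slices_disjoint:
  assumes x: "x \<in> closed_nbhd G (slice_G G S v)" and v: "v \<in> closed_nbhd H (slice_H G S x)"
  shows False
proof -
  obtain y where "y \<in> slice_G G S v" "y = x \<or> adj G y x"
    using x unfolding closed_nbhd_def by blast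
  then have y: "(y, v) \<in> S" "\<forall>z. adj G y z \<longrightarrow> (z, v) \<notin> S" "y = x \<or> adj G y x"
    unfolding slice_G_def by blast+
  obtain w where "w \<in> slice_H G S x" "w = v \<or> adj H w v"
    using v unfolding closed_nbhd_def by blast
  then obtain z where w: "(x, w) \<in> S" "(z, w) \<in> S" "adj G x z" "w = v \<or> adj H w v"
    unfolding slice_H_def by blast
  show False
    using y(3) w(4)
  proof (elim disjE)
    assume "y = x" "w = v"
    then show False using y w by blast
  next
    assume "y = x" "adj H w v"
    then show False using y(1) w(2,3) not_adj_in_S simple_graph_adj_sym[OF H] by blast
  next
    assume "adj G y x" "w = v"
    then show False using y w(1) by blast
  next
    assume "adj G y x" "adj H w v"
    then show False using y(1) w(1) not_adj_in_S simple_graph_adj_sym[OF H] by blast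
  qed
qed

definition covered :: "('a \<times> 'b) set" where
  "covered = {(x, v) \<in> verts G \<times> verts H.
     x \<in> closed_nbhd G (slice_G G S v) \<or> v \<in> closed_nbhd H (slice_H G S x)}"

lemma covered_subset: "covered \<subseteq> verts G \<times> verts H"
  by (auto simp: covered_def)

lemma finite_covered: "finite covered"
  using covered_subset simple_graph_finite[OF G] simple_graph_finite[OF H]
  by (meson finite_SigmaI finite_subset)

lemma card_covered:
  "card covered = (\<Sum>v\<in>verts H. card (closed_nbhd G (slice_G G S v)))
     + (\<Sum>x\<in>verts G. card (closed_nbhd H (slice_H G S x)))"
proof -
  let ?CG = "{(x, v). v \<in> verts H \<and> x \<in> closed_nbhd G (slice_G G S v)}"
    and ?CH = "SIGMA x:verts G. closed_nbhd H (slice_H G S x)"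
  have covered_eq: "covered = ?CG \<union> ?CH"
    using closed_nbhd_subset_verts[OF slice_G_subset] closed_nbhd_subset_verts[OF slice_H_subset]
    unfolding covered_def by blast
  have "?CG \<inter> ?CH = {}"
  proof (intro equalityI subsetI)
    fix p assume "p \<in> ?CG \<inter> ?CH"
    then obtain x v where "x \<in> closed_nbhd G (slice_G G S v)" "v \<in> closed_nbhd H (slice_H G S x)"
      by blast
    then show "p \<in> {}"
      by (rule closed_nbhd_slices_disjoint[THEN FalseE])
  qed simp
  moreover have "finite ?CG" "finite ?CH"
    using finite_covered unfolding covered_eq by simp_all
  ultimately have "card covered = card ?CG + card ?CH"
    unfolding covered_eq by (rule card_Un_disjoint[rotated 2])
  moreover have "card ?CG = (\<Sum>v\<in>verts H. card (closed_nbhd G (slice_G G S v)))"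
    using simple_graph_finite[OF H] finite_closed_nbhd[OF G slice_G_subset] by (rule card_swapped_Sigma)
  moreover have "card ?CH = (\<Sum>x\<in>verts G. card (closed_nbhd H (slice_H G S x)))"
    using simple_graph_finite[OF G] finite_closed_nbhd[OF H slice_H_subset] by simp
  ultimately show ?thesis
    by simp
qed

lemma card_covered_le: "card covered \<le> card (verts G \<times> verts H)"
  using covered_subset simple_graph_finite[OF G] simple_graph_finite[OF H]
  by (intro card_mono) auto

context
  fixes r :: real
  assumes ratio_G: "\<And>A. indep_set G A \<Longrightarrow> card A \<le> r * card (closed_nbhd G A)"
    and ratio_H: "\<And>B. indep_set H B \<Longrightarrow> card B \<le> r * card (closed_nbhd H B)"
begin

lemma sum_slices_G_le:
  "(\<Sum>v\<in>verts H. real (card (slice_G G S v)))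
     \<le> (\<Sum>v\<in>verts H. r * card (closed_nbhd G (slice_G G S v)))"
  using ratio_G indep_slice_G by (intro sum_mono) auto

lemma sum_slices_H_le:
  "(\<Sum>x\<in>verts G. real (card (slice_H G S x)))
     \<le> (\<Sum>x\<in>verts G. r * card (closed_nbhd H (slice_H G S x)))"
  using ratio_H indep_slice_H by (intro sum_mono) auto

lemma card_le_ratio_card_covered: "card S \<le> r * card covered"
  using sum_slices_G_le sum_slices_H_le
  by (simp add: card_eq_sum_slices card_covered distrib_left sum_distrib_left)

lemma tight_slices_of_card_eq:
  assumes eq: "card S = r * card covered"
  shows "v \<in> verts H \<Longrightarrow> card (slice_G G S v) = r * card (closed_nbhd G (slice_G G S v))"
    and "x \<in> verts G \<Longrightarrow> card (slice_H G S x) = r * card (closed_nbhd H (slice_H G S x))"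
proof -
  have "(\<Sum>v\<in>verts H. real (card (slice_G G S v)))
      = (\<Sum>v\<in>verts H. r * card (closed_nbhd G (slice_G G S v)))"
   and "(\<Sum>x\<in>verts G. real (card (slice_H G S x)))
      = (\<Sum>x\<in>verts G. r * card (closed_nbhd H (slice_H G S x)))"
    using eq sum_slices_G_le sum_slices_H_le
    by (simp_all add: card_eq_sum_slices card_covered distrib_left sum_distrib_left)
  then show "v \<in> verts H \<Longrightarrow> card (slice_G G S v) = r * card (closed_nbhd G (slice_G G S v))"
    and "x \<in> verts G \<Longrightarrow> card (slice_H G S x) = r * card (closed_nbhd H (slice_H G S x))"
    using ratio_G ratio_H indep_slice_G indep_slice_H
      simple_graph_finite[OF G] simple_graph_finite[OF H]
    by (auto elim!: sum_mono_inv)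
qed

end

end

section \<open>Maximum independent sets of a direct product\<close>

lemma max_indep_sets_eq_of_connected:
  assumes G: "simple_graph G" and H: "simple_graph H" and conn: "connected_graph H"
    and max: "\<And>v. v \<in> verts H \<Longrightarrow> max_indep_set G (F v)"
    and no_edge: "\<And>v w x y. adj H v w \<Longrightarrow> x \<in> F v \<Longrightarrow> y \<in> F w \<Longrightarrow> \<not> adj G x y"
    and v: "v \<in> verts H" and w: "w \<in> verts H"
  shows "F v = F w"
proof -
  have step: "F v = F w" if vw: "adj H v w" for v w
  proof -
    have verts: "v \<in> verts H" "w \<in> verts H"
      using simple_graph_adj_verts[OF H vw] by auto
    have "indep_set G (F v \<union> F w)"
      unfolding indep_set_def
    proof (intro conjI ballI)
      show "F v \<union> F w \<subseteq> verts G"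
        using max[OF verts(1)] max[OF verts(2)] by (auto simp: max_indep_set_def indep_set_def)
    next
      fix x y assume "x \<in> F v \<union> F w" "y \<in> F v \<union> F w"
      then show "\<not> adj G x y"
        using max[OF verts(1)] max[OF verts(2)] no_edge[OF vw] simple_graph_adj_sym[OF G]
        unfolding max_indep_set_def indep_set_def by blast
    qed
    then have "card (F v \<union> F w) \<le> indep_num G"
      by (rule card_le_indep_num[OF G])
    moreover have "finite (F v \<union> F w)"
      using indep_set_finite[OF G] max[OF verts(1)] max[OF verts(2)]
      by (auto simp: max_indep_set_def)
    ultimately have "F v = F v \<union> F w" "F w = F v \<union> F w"
      using max[OF verts(1)] max[OF verts(2)] card_mono[of "F v \<union> F w"]
      by (metis Un_upper1 Un_upper2 card_subset_eq le_antisym max_indep_set_def)+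
    then show ?thesis
      by simp
  qed
  have "(adj H)\<^sup>*\<^sup>* v w"
    using conn v w by (simp add: connected_graph_def)
  then show ?thesis
    by (induction rule: rtranclp_induct) (auto dest: step)
qed

locale vertex_transitive_pair =
  fixes G :: "'a graph" and H :: "'b graph"
  assumes G: "simple_graph G" and H: "simple_graph H"
    and ne_G: "verts G \<noteq> {}" and ne_H: "verts H \<noteq> {}"
    and vt_G: "vertex_transitive G" and vt_H: "vertex_transitive H"
    and ratio_le: "indep_ratio H \<le> indep_ratio G"
begin

lemma indep_ratio_G_pos: "0 < indep_ratio G"
  using indep_num_pos[OF G ne_G] ne_G simple_graph_finite[OF G]
  by (simp add: indep_ratio_def card_gt_0_iff)

lemma card_indep_G_le: "indep_set G A \<Longrightarrow> card A \<le> indep_ratio G * card (closed_nbhd G A)"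
  by (rule vertex_transitive_card_indep_le_ratio[OF G vt_G])

lemma card_indep_H_le: "indep_set H B \<Longrightarrow> card B \<le> indep_ratio G * card (closed_nbhd H B)"
  using vertex_transitive_card_indep_le_ratio[OF H vt_H] ratio_le
  by (meson mult_right_mono of_nat_0_le_iff order_trans)

lemma indep_ratio_G_mult_card_verts:
  "indep_ratio G * card (verts G \<times> verts H) = real (indep_num G * card (verts H))"
  using indep_ratio_mult_card_verts[OF ne_G G]
  by (simp add: card_cartesian_product mult.assoc[symmetric])

lemma card_indep_direct_prod_le:
  assumes S: "indep_set (direct_prod G H) S"
  shows "card S \<le> indep_num G * card (verts H)"
proof -
  interpret indep_set_direct_prod G H S
    using G H S by unfold_locales
  have "indep_ratio G * card covered \<le> indep_ratio G * card (verts G \<times> verts H)"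
    using card_covered_le indep_ratio_G_pos by simp
  then have "card S \<le> indep_ratio G * card (verts G \<times> verts H)"
    using card_le_ratio_card_covered[OF card_indep_G_le card_indep_H_le] by linarith
  then show ?thesis
    unfolding indep_ratio_G_mult_card_verts by linarith
qed

lemma indep_num_direct_prod: "indep_num (direct_prod G H) = indep_num G * card (verts H)"
proof (rule antisym)
  obtain S where "max_indep_set (direct_prod G H) S"
    using ex_max_indep_set[OF simple_graph_direct_prod[OF G H]] by blast
  then show "indep_num (direct_prod G H) \<le> indep_num G * card (verts H)"
    by (auto simp: max_indep_set_def dest: card_indep_direct_prod_le)
  obtain I where "max_indep_set G I"
    using ex_max_indep_set[OF G] by blast
  then show "indep_num G * card (verts H) \<le> indep_num (direct_prod G H)"
    using card_le_indep_num[OF simple_graph_direct_prod[OF G H] indep_set_times_verts]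
    by (fastforce simp: max_indep_set_def card_cartesian_product)
qed

lemma max_indep_set_direct_prod_slices:
  assumes S: "max_indep_set (direct_prod G H) S"
  shows "indep_set_direct_prod G H S"
    and "v \<in> verts H \<Longrightarrow> card (slice_G G S v) = indep_ratio G * card (closed_nbhd G (slice_G G S v))"
    and "x \<in> verts G \<Longrightarrow> card (slice_H G S x) = indep_ratio G * card (closed_nbhd H (slice_H G S x))"
    and "x \<in> verts G \<Longrightarrow> v \<in> verts H \<Longrightarrow>
           x \<in> closed_nbhd G (slice_G G S v) \<or> v \<in> closed_nbhd H (slice_H G S x)"
proof -
  show S': "indep_set_direct_prod G H S"
    using G H S by (simp add: indep_set_direct_prod_def max_indep_set_def)
  interpret indep_set_direct_prod G H S
    by (fact S')
  have card_S: "card S = indep_ratio G * card (verts G \<times> verts H)"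
    using S indep_num_direct_prod unfolding indep_ratio_G_mult_card_verts
    by (simp add: max_indep_set_def)
  have "indep_ratio G * card covered \<le> indep_ratio G * card (verts G \<times> verts H)"
    using card_covered_le indep_ratio_G_pos by simp
  then have tight: "card S = indep_ratio G * card covered"
    using card_S card_le_ratio_card_covered[OF card_indep_G_le card_indep_H_le] by linarith
  then have "card covered = card (verts G \<times> verts H)"
    using card_S indep_ratio_G_pos by simp
  then have "covered = verts G \<times> verts H"
    using covered_subset simple_graph_finite[OF G] simple_graph_finite[OF H]
    by (intro card_subset_eq) auto
  then show "x \<in> verts G \<Longrightarrow> v \<in> verts H \<Longrightarrow>
      x \<in> closed_nbhd G (slice_G G S v) \<or> v \<in> closed_nbhd H (slice_H G S x)"
    by (auto simp: covered_def)
  show "v \<in> verts H \<Longrightarrow> card (slice_G G S v) = indep_ratio G * card (closed_nbhd G (slice_G G S v))"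
    and "x \<in> verts G \<Longrightarrow> card (slice_H G S x) = indep_ratio G * card (closed_nbhd H (slice_H G S x))"
    using tight_slices_of_card_eq[OF card_indep_G_le card_indep_H_le tight] by blast+
qed

lemma max_indep_set_eq_times_verts:
  assumes S: "max_indep_set (direct_prod G H) S"
    and empty: "\<And>x. x \<in> verts G \<Longrightarrow> slice_H G S x = {}"
    and conn: "connected_graph H"
  shows "\<exists>I. indep_set G I \<and> S = I \<times> verts H"
proof -
  note slices = max_indep_set_direct_prod_slices[OF S]
  interpret indep_set_direct_prod G H S
    by (fact slices(1))
  have max: "max_indep_set G (slice_G G S v)" if v: "v \<in> verts H" for v
  proof -
    have "closed_nbhd G (slice_G G S v) = verts G"
      using slices(4)[OF _ v] empty closed_nbhd_subset_verts[OF slice_G_subset[of v]]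
      by (intro equalityI subsetI) auto
    then have "card (slice_G G S v) = indep_num G"
      using slices(2)[OF v] indep_ratio_mult_card_verts[OF ne_G G] by simp
    then show ?thesis
      using indep_slice_G by (simp add: max_indep_set_def)
  qed
  obtain v0 where v0: "v0 \<in> verts H"
    using ne_H by blast
  have "slice_G G S v = slice_G G S v0" if "v \<in> verts H" for v
    using max_indep_sets_eq_of_connected[OF G H conn max no_edge_between_slices_G that v0] .
  then have "S = slice_G G S v0 \<times> verts H"
    using empty by (subst S_eq_slices) auto
  then show ?thesis
    using indep_slice_G by blast
qed

lemma max_indep_set_eq_verts_times:
  assumes S: "max_indep_set (direct_prod G H) S"
    and empty: "\<And>v. v \<in> verts H \<Longrightarrow> slice_G G S v = {}"
    and conn: "connected_graph G" and ratio_eq: "indep_ratio G = indep_ratio H"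
  shows "\<exists>J. indep_set H J \<and> S = verts G \<times> J"
proof -
  note slices = max_indep_set_direct_prod_slices[OF S]
  interpret indep_set_direct_prod G H S
    by (fact slices(1))
  have max: "max_indep_set H (slice_H G S x)" if x: "x \<in> verts G" for x
  proof -
    have "closed_nbhd H (slice_H G S x) = verts H"
      using slices(4)[OF x] empty closed_nbhd_subset_verts[OF slice_H_subset[of x]]
      by (intro equalityI subsetI) auto
    then have "card (slice_H G S x) = indep_num H"
      using slices(3)[OF x] indep_ratio_mult_card_verts[OF ne_H H] ratio_eq by simp
    then show ?thesis
      using indep_slice_H by (simp add: max_indep_set_def)
  qed
  obtain x0 where x0: "x0 \<in> verts G"
    using ne_G by blast
  have "slice_H G S x = slice_H G S x0" if "x \<in> verts G" for x
    using max_indep_sets_eq_of_connected[OF H G conn max no_edge_between_slices_H that x0] .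
  then have "S = verts G \<times> slice_H G S x0"
    using empty by (subst S_eq_slices) auto
  then show ?thesis
    using indep_slice_H by blast
qed

lemma MIS_normal_of_ratio_less:
  assumes less: "indep_ratio H < indep_ratio G" and conn: "connected_graph H"
  shows "MIS_normal G H"
  unfolding MIS_normal_def
proof (intro allI impI disjI1)
  fix S assume S: "max_indep_set (direct_prod G H) S"
  note slices = max_indep_set_direct_prod_slices[OF S]
  interpret indep_set_direct_prod G H S
    by (fact slices(1))
  have "slice_H G S x = {}" if x: "x \<in> verts G" for x
  proof (rule ccontr)
    assume ne: "slice_H G S x \<noteq> {}"
    let ?N = "real (card (closed_nbhd H (slice_H G S x)))"
    have "0 < ?N"
      using card_closed_nbhd_pos[OF H indep_slice_H ne] by simp
    then have "indep_ratio H * ?N < indep_ratio G * ?N"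
      using less by simp
    then show False
      using slices(3)[OF x] vertex_transitive_card_indep_le_ratio[OF H vt_H indep_slice_H[of x]]
      by linarith
  qed
  then show "\<exists>I. indep_set G I \<and> S = I \<times> verts H"
    using max_indep_set_eq_times_verts[OF S _ conn] by blast
qed

lemma MIS_normal_of_not_IS_imprimitive:
  assumes ratio_eq: "indep_ratio G = indep_ratio H"
    and prim_G: "\<not> IS_imprimitive G" and prim_H: "\<not> IS_imprimitive H"
  shows "MIS_normal G H"
  unfolding MIS_normal_def
proof (intro allI impI)
  fix S assume S: "max_indep_set (direct_prod G H) S"
  note slices = max_indep_set_direct_prod_slices[OF S]
  interpret indep_set_direct_prod G H S
    by (fact slices(1))
  have conn: "connected_graph G" "connected_graph H"
    using disconnected_IS_imprimitive[OF G vt_G ne_G] disconnected_IS_imprimitive[OF H vt_H ne_H]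
      prim_G prim_H by blast+
  txt \<open>By primitivity a nonempty slice dominates its whole factor, so a nonempty \<open>G\<close>-slice
    and a nonempty \<open>H\<close>-slice would have overlapping closed neighbourhoods.\<close>
  have "(\<forall>x\<in>verts G. slice_H G S x = {}) \<or> (\<forall>v\<in>verts H. slice_G G S v = {})"
  proof (rule ccontr)
    assume "\<not> ?thesis"
    then obtain x v where x: "x \<in> verts G" "slice_H G S x \<noteq> {}"
      and v: "v \<in> verts H" "slice_G G S v \<noteq> {}"
      by blast
    have "closed_nbhd G (slice_G G S v) = verts G"
      using not_IS_imprimitive_tight_indep_set[OF G prim_G indep_slice_G v(2) slices(2)[OF v(1)]]
      by blast
    moreover have "closed_nbhd H (slice_H G S x) = verts H"
      using not_IS_imprimitive_tight_indep_set[OF H prim_H indep_slice_H x(2)]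
        slices(3)[OF x(1)] ratio_eq by simp
    ultimately show False
      using closed_nbhd_slices_disjoint x(1) v(1) by blast
  qed
  then show "(\<exists>I. indep_set G I \<and> S = I \<times> verts H) \<or> (\<exists>J. indep_set H J \<and> S = verts G \<times> J)"
    using max_indep_set_eq_times_verts[OF S _ conn(2)]
      max_indep_set_eq_verts_times[OF S _ conn(1) ratio_eq] by blast
qed

end

theorem theorem1p8:
  fixes G :: "'a graph" and H :: "'b graph"
  assumes "simple_graph G" and "simple_graph H"
    and "verts G \<noteq> {}" and "verts H \<noteq> {}"
    and "vertex_transitive G" and "vertex_transitive H"
    and ratio: "real (indep_num G) / real (card (verts G))
                  \<ge> real (indep_num H) / real (card (verts H))"
  shows "indep_num (direct_prod G H) = indep_num G * card (verts H)
    \<and> (MIS_normal G H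
       \<or> (real (indep_num G) / real (card (verts G))
              = real (indep_num H) / real (card (verts H))
           \<and> (IS_imprimitive G \<or> IS_imprimitive H))
       \<or> (real (indep_num G) / real (card (verts G))
              > real (indep_num H) / real (card (verts H))
           \<and> \<not> connected_graph H))"
proof -
  interpret vertex_transitive_pair G H
    using assms by unfold_locales (simp_all add: indep_ratio_def)
  have "MIS_normal G H
    \<or> indep_ratio G = indep_ratio H \<and> (IS_imprimitive G \<or> IS_imprimitive H)
    \<or> indep_ratio G > indep_ratio H \<and> \<not> connected_graph H"
    using MIS_normal_of_ratio_less MIS_normal_of_not_IS_imprimitive ratio_le by fastforce
  then show ?thesis
    using indep_num_direct_prod by (simp add: indep_ratio_def)
qed

end
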